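(* Let $0<p<1$, let $\epsilon_1,\epsilon_2,\dots$ be i.i.d. $\mathrm{Bernoulli}(p)$ random variables, and let $Y_i=\begin{pmatrix}\epsilon_i&1\\1&0\end{pmatrix}$, $S_n=Y_nY_{n-1}\cdots Y_1$. Then the top Lyapunov exponent $\lambda(p)=\lim_{n\to\infty}\frac1n\mathbb{E}[\log\|S_n\|]$ satisfies \[ \frac{p\log 3}{4-p}\le \lambda(p)\le \frac{p\log 3}{2}. \]
   Context: $\mathrm{Bernoulli}(p)$ means $\mathbb{P}(\epsilon=1)=p$, $\mathbb{P}(\epsilon=0)=1-p$. $\|\cdot\|$ is any matrix norm (the limit is independent of the choice). It is known that $\lambda(p)=\mathbb{E}[\log X_p]$, where $X_p$ is a $(0,\infty)$-valued random variable with atomless law, uniquely determined by $X_p\sim\frac1{X_p}+\epsilon$ with $\epsilon\sim\mathrm{Bernoulli}(p)$ independent of $X_p$. *)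

theory Defs
  imports "HOL-Analysis.Analysis"
begin

definition Ymat :: "bool \<Rightarrow> real^2^2" where
  "Ymat e = (\<chi> i j. if i = 1 \<and> j = 1 then (if e then 1 else 0)
                     else if i = 2 \<and> j = 2 then 0 else 1)"

text \<open>For es = [eps_1, ..., eps_n], Sprod es = Y_n ** ... ** Y_1.\<close>
definition Sprod :: "bool list \<Rightarrow> real^2^2" where
  "Sprod es = foldl (\<lambda>M e. Ymat e ** M) (mat 1) es"

definition bern_weight :: "real \<Rightarrow> bool list \<Rightarrow> real" where
  "bern_weight p es = (\<Prod>e\<leftarrow>es. if e then p else 1 - p)"

text \<open>E[log ||S_n||] for i.i.d. Bernoulli(p) eps_1..eps_n (finite expectation);
  the norm on real^2^2 is the Frobenius norm.\<close>
definition exp_log_norm :: "real \<Rightarrow> nat \<Rightarrow> real" where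
  "exp_log_norm p n = (\<Sum>es \<in> {es::bool list. length es = n}.
                         bern_weight p es * ln (norm (Sprod es)))"

end

theory Submission
  imports Defs
begin

text \<open>
  The Frobenius norm is submultiplicative, so \<open>E[log \<parallel>S\<^sub>n\<parallel>]\<close> is subadditive in \<open>n\<close> and, by
  Fekete's lemma, \<open>E[log \<parallel>S\<^sub>n\<parallel>] / n\<close> converges once it is bounded below. Both bounds on the limit
  come from linear bounds on \<open>E[log \<parallel>S\<^sub>n\<parallel>]\<close>, obtained from one-step drift estimates.

  Upper bound: \<open>Y\<^sub>0\<close> swaps the rows of \<open>S\<^sub>n\<close> and \<open>\<parallel>Y\<^sub>1 M\<parallel>\<^sup>2 \<le> 3 \<parallel>M\<parallel>\<^sup>2\<close>, so each step raises
  \<open>log \<parallel>S\<^sub>n\<parallel>\<close> in expectation by at most \<open>p log 3 / 2\<close>.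

  Lower bound: the row sums \<open>(a, b)\<close> of \<open>S\<^sub>n\<close> move to \<open>(a + b, a)\<close> with probability \<open>p\<close> and to
  \<open>(b, a)\<close> otherwise. The growth \<open>log ((2a + b)/(a + b))\<close> of the first move depends on
  \<open>r = a/b\<close>, so \<open>log (a + b)\<close> alone has no uniform drift; adding \<open>log 3\<close> times a piecewise
  constant correction in \<open>r\<close> gives a potential whose expected increment is at least
  \<open>p log 3 / (4 - p)\<close> for every \<open>r\<close>, and which differs from \<open>log \<parallel>S\<^sub>n\<parallel>\<close> by a bounded amount.
\<close>

section \<open>Expectation over Bernoulli words\<close>

definition bern_expectation :: "real \<Rightarrow> nat \<Rightarrow> (bool list \<Rightarrow> real) \<Rightarrow> real" where
  "bern_expectation p n f = (\<Sum>es \<in> {es. length es = n}. bern_weight p es * f es)"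

lemma bij_betw_append_lists_length:
  "bij_betw (\<lambda>(xs, ys). xs @ ys) ({xs. length xs = m} \<times> {ys. length ys = n}) {zs. length zs = m + n}"
  by (rule bij_betwI[where g = "\<lambda>zs. (take m zs, drop m zs)"]) auto

lemma bern_weight_append: "bern_weight p (xs @ ys) = bern_weight p xs * bern_weight p ys"
  by (simp add: bern_weight_def)

lemma bern_weight_nonneg: "0 \<le> p \<Longrightarrow> p \<le> 1 \<Longrightarrow> 0 \<le> bern_weight p es"
  unfolding bern_weight_def by (induction es) auto

lemma bern_expectation_append:
  "bern_expectation p (m + n) f = bern_expectation p m (\<lambda>xs. bern_expectation p n (\<lambda>ys. f (xs @ ys)))"
proof -
  have "bern_expectation p (m + n) f =
      (\<Sum>(xs, ys) \<in> {xs. length xs = m} \<times> {ys. length ys = n}. bern_weight p (xs @ ys) * f (xs @ ys))"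
    unfolding bern_expectation_def
    by (subst sum.reindex_bij_betw[OF bij_betw_append_lists_length, symmetric])
       (simp add: case_prod_unfold)
  then show ?thesis
    by (simp add: bern_expectation_def sum.cartesian_product bern_weight_append
        sum_distrib_left mult.assoc)
qed

lemma bern_expectation_0 [simp]: "bern_expectation p 0 f = f []"
  by (simp add: bern_expectation_def bern_weight_def)

lemma bern_expectation_Suc:
  "bern_expectation p (Suc n) f =
     bern_expectation p n (\<lambda>es. p * f (es @ [True]) + (1 - p) * f (es @ [False]))"
proof -
  have "{es::bool list. length es = Suc 0} = {[True], [False]}"
    by (auto simp: length_Suc_conv)
  then show ?thesis
    using bern_expectation_append[of p n 1 f] by (simp add: bern_expectation_def bern_weight_def)
qed

lemma bern_expectation_mono:
  "0 \<le> p \<Longrightarrow> p \<le> 1 \<Longrightarrow> (\<And>es. f es \<le> g es) \<Longrightarrow> bern_expectation p n f \<le> bern_expectation p n g"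
  unfolding bern_expectation_def by (intro sum_mono mult_left_mono) (auto simp: bern_weight_nonneg)

lemma bern_expectation_add:
  "bern_expectation p n (\<lambda>es. f es + g es) = bern_expectation p n f + bern_expectation p n g"
  unfolding bern_expectation_def by (simp add: distrib_left sum.distrib)

lemma bern_expectation_const [simp]: "bern_expectation p n (\<lambda>_. c) = c"
  by (induction n) (simp_all add: bern_expectation_Suc algebra_simps)

lemma bern_expectation_ge_drift:
  assumes "0 \<le> p" "p \<le> 1"
    and "\<And>es. f es + c \<le> p * f (es @ [True]) + (1 - p) * f (es @ [False])"
  shows "f [] + real n * c \<le> bern_expectation p n f"
proof (induction n)
  case (Suc n)
  have "bern_expectation p n f + c = bern_expectation p n (\<lambda>es. f es + c)"
    by (simp add: bern_expectation_add)
  also have "\<dots> \<le> bern_expectation p (Suc n) f"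
    unfolding bern_expectation_Suc by (rule bern_expectation_mono) (use assms in auto)
  finally show ?case using Suc by (simp add: algebra_simps)
qed simp

lemma bern_expectation_le_drift:
  assumes "0 \<le> p" "p \<le> 1"
    and "\<And>es. p * f (es @ [True]) + (1 - p) * f (es @ [False]) \<le> f es + c"
  shows "bern_expectation p n f \<le> f [] + real n * c"
proof (induction n)
  case (Suc n)
  have "bern_expectation p (Suc n) f \<le> bern_expectation p n (\<lambda>es. f es + c)"
    unfolding bern_expectation_Suc by (rule bern_expectation_mono) (use assms in auto)
  also have "\<dots> = bern_expectation p n f + c"
    by (simp add: bern_expectation_add)
  finally show ?case using Suc by (simp add: algebra_simps)
qed simp

section \<open>Fekete's lemma\<close>

lemma subadditive_le_multiple:
  fixes a :: "nat \<Rightarrow> real"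
  assumes sub: "\<And>m n. a (m + n) \<le> a m + a n"
  shows "a (q * m + i) \<le> real q * a m + a i"
proof (induction q)
  case (Suc q)
  have "a (Suc q * m + i) \<le> a m + a (q * m + i)"
    using sub[of m "q * m + i"] by (simp add: add.assoc)
  with Suc show ?case by (simp add: algebra_simps)
qed simp

lemma subadditive_quotient_le:
  fixes a :: "nat \<Rightarrow> real"
  assumes sub: "\<And>m n. a (m + n) \<le> a m + a n" and "0 < m" "0 < n"
  shows "a n / n \<le> a m / m + (\<bar>a m\<bar> + (\<Sum>i<m. \<bar>a i\<bar>)) / n"
proof -
  define q i where "q = n div m" and "i = n mod m"
  have n: "n = q * m + i" and "i < m"
    using \<open>0 < m\<close> by (simp_all add: q_def i_def)
  have "a i \<le> (\<Sum>i<m. \<bar>a i\<bar>)"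
    using member_le_sum[of i "{..<m}" "\<lambda>i. \<bar>a i\<bar>"] \<open>i < m\<close> by simp
  moreover have "- (real i * (a m / m)) \<le> \<bar>a m\<bar>"
  proof -
    have "\<bar>real i * (a m / m)\<bar> \<le> \<bar>a m\<bar>"
      using \<open>i < m\<close> by (simp add: abs_mult field_simps mult_right_mono)
    then show ?thesis by linarith
  qed
  moreover have "real q * a m = n * (a m / m) - i * (a m / m)"
    using \<open>0 < m\<close> by (simp add: n field_simps)
  moreover have "a n \<le> real q * a m + a i"
    using subadditive_le_multiple[of a, OF sub, of q m i] n by simp
  ultimately have "a n \<le> n * (a m / m) + (\<bar>a m\<bar> + (\<Sum>i<m. \<bar>a i\<bar>))"
    by linarith
  then show ?thesis
    using \<open>0 < n\<close> by (simp add: field_simps)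
qed

lemma subadditive_quotient_convergent:
  fixes a :: "nat \<Rightarrow> real"
  assumes sub: "\<And>m n. a (m + n) \<le> a m + a n"
    and lower: "\<And>n. C + real n * k \<le> a n"
  shows "convergent (\<lambda>n. a n / n)"
proof -
  define S where "S = (\<lambda>n. a n / n) ` {1..}"
  have "k - \<bar>C\<bar> \<le> a n / n" if "n \<ge> 1" for n
  proof -
    have "\<bar>C / n\<bar> \<le> \<bar>C\<bar>"
      using that by (simp add: divide_le_eq mult_le_cancel_left1)
    then have "- \<bar>C\<bar> \<le> C / n"
      by linarith
    moreover have "(C + real n * k) / n \<le> a n / n"
      by (rule divide_right_mono[OF lower]) simp
    ultimately show ?thesis
      using that by (simp add: add_divide_distrib)
  qed
  then have bdd: "bdd_below S"
    unfolding S_def by (auto intro!: bdd_belowI)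
  have "(\<lambda>n. a n / n) \<longlonglongrightarrow> Inf S"
  proof (rule order_tendstoI)
    fix y assume "y < Inf S"
    have "Inf S \<le> a n / n" if "n \<ge> 1" for n
      by (rule cInf_lower[OF _ bdd]) (use that in \<open>simp add: S_def\<close>)
    with \<open>y < Inf S\<close> show "\<forall>\<^sub>F n in sequentially. y < a n / n"
      unfolding eventually_sequentially by (auto intro: less_le_trans)
  next
    fix y assume "Inf S < y"
    then obtain m where "m \<ge> 1" "a m / m < y"
      using cInf_less_iff[OF _ bdd] unfolding S_def by auto
    define K where "K = \<bar>a m\<bar> + (\<Sum>i<m. \<bar>a i\<bar>)"
    have "(\<lambda>n. a m / m + K / n) \<longlonglongrightarrow> a m / m + 0"
      by (intro tendsto_intros)
    then have close: "\<forall>\<^sub>F n in sequentially. a m / m + K / n < y"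
      using \<open>a m / m < y\<close> by (auto dest: order_tendstoD)
    have bound: "a n / n \<le> a m / m + K / n" if "n > 0" for n
      using subadditive_quotient_le[of a, OF sub _ that] \<open>m \<ge> 1\<close> unfolding K_def by simp
    show "\<forall>\<^sub>F n in sequentially. a n / n < y"
      using close eventually_gt_at_top[of 0]
    proof eventually_elim
      case (elim n)
      with bound[of n] show ?case by linarith
    qed
  qed
  then show ?thesis
    unfolding convergent_def by blast
qed

lemma limit_quotient_between_slopes:
  fixes a :: "nat \<Rightarrow> real"
  assumes lim: "(\<lambda>n. a n / n) \<longlonglongrightarrow> l"
    and lower: "\<And>n. C1 + real n * k \<le> a n" and upper: "\<And>n. a n \<le> C2 + real n * u"
  shows "k \<le> l \<and> l \<le> u"
proof
  have "(\<lambda>n. C1 / n + k) \<longlonglongrightarrow> k"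
    using tendsto_add[OF lim_const_over_n tendsto_const] by simp
  moreover have "C1 / n + k \<le> a n / n" if "n \<ge> 1" for n
    using divide_right_mono[OF lower[of n], of n] that by (simp add: add_divide_distrib)
  ultimately show "k \<le> l"
    by (intro LIMSEQ_le[OF _ lim]) auto
next
  have "(\<lambda>n. C2 / n + u) \<longlonglongrightarrow> u"
    using tendsto_add[OF lim_const_over_n tendsto_const] by simp
  moreover have "a n / n \<le> C2 / n + u" if "n \<ge> 1" for n
    using divide_right_mono[OF upper[of n], of n] that by (simp add: add_divide_distrib)
  ultimately show "l \<le> u"
    by (intro LIMSEQ_le[OF lim]) auto
qed

section \<open>The products of the random matrices\<close>

lemma Sprod_Nil: "Sprod [] = mat 1"
  by (simp add: Sprod_def)

lemma Sprod_snoc: "Sprod (es @ [e]) = Ymat e ** Sprod es"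
  by (simp add: Sprod_def)

lemma Sprod_append: "Sprod (xs @ ys) = Sprod ys ** Sprod xs"
  by (induction ys rule: rev_induct)
     (simp_all add: Sprod_Nil Sprod_snoc matrix_mul_assoc flip: append_assoc)

lemma norm_matrix_mult_le:
  fixes A :: "real^'n^'m" and B :: "real^'k^'n"
  shows "norm (A ** B) \<le> norm A * norm B"
proof -
  have vec: "(norm v)\<^sup>2 = (\<Sum>i\<in>UNIV. (norm (v $ i))\<^sup>2)" for v :: "'c::real_normed_vector^'b"
    by (simp add: norm_vec_def L2_set_def sum_nonneg)
  have entry: "((A ** B) $ i $ j)\<^sup>2 \<le> (norm (A $ i))\<^sup>2 * (norm (column j B))\<^sup>2" for i j
  proof -
    have "(A ** B) $ i $ j = inner (A $ i) (column j B)"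
      by (simp add: matrix_matrix_mult_def inner_vec_def column_def)
    also have "\<bar>\<dots>\<bar> \<le> norm (A $ i) * norm (column j B)"
      by (rule Cauchy_Schwarz_ineq2)
    finally have "\<bar>(A ** B) $ i $ j\<bar> \<le> norm (A $ i) * norm (column j B)" .
    from power_mono[OF this abs_ge_zero, of 2] show ?thesis
      by (simp add: power_mult_distrib)
  qed
  have "(norm (A ** B))\<^sup>2 \<le> (\<Sum>i\<in>UNIV. \<Sum>j\<in>UNIV. (norm (A $ i))\<^sup>2 * (norm (column j B))\<^sup>2)"
    unfolding vec[of "A ** B"] vec[of "(A ** B) $ _"] real_norm_def power2_abs
    by (intro sum_mono entry)
  also have "\<dots> = (\<Sum>i\<in>UNIV. (norm (A $ i))\<^sup>2) * (\<Sum>j\<in>UNIV. (norm (column j B))\<^sup>2)"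
    by (simp add: sum_product)
  also have "(\<Sum>j\<in>UNIV. (norm (column j B))\<^sup>2) = (\<Sum>j\<in>UNIV. \<Sum>k\<in>UNIV. (B $ k $ j)\<^sup>2)"
    by (simp add: vec column_def)
  also have "\<dots> = (\<Sum>k\<in>UNIV. (norm (B $ k))\<^sup>2)"
    by (subst sum.swap) (simp add: vec)
  finally have "(norm (A ** B))\<^sup>2 \<le> (norm A * norm B)\<^sup>2"
    by (simp add: vec power_mult_distrib)
  then show ?thesis
    by (rule power2_le_imp_le) simp
qed

lemma norm_mat2:
  "norm (M :: real^2^2) = sqrt ((M$1$1)\<^sup>2 + (M$1$2)\<^sup>2 + (M$2$1)\<^sup>2 + (M$2$2)\<^sup>2)"
  by (simp add: norm_vec_def L2_set_def sum_2 add.assoc)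

lemma Ymat_mult_nth:
  fixes M :: "real^'n^2"
  shows
  "(Ymat e ** M) $ 1 $ j = (if e then M$1$j else 0) + M$2$j"
  "(Ymat e ** M) $ 2 $ j = M$1$j"
  by (simp_all add: Ymat_def matrix_matrix_mult_def sum_2)

lemma norm_Ymat_False_mult: "norm (Ymat False ** (M :: real^2^2)) = norm M"
  by (simp add: norm_mat2 Ymat_mult_nth add_ac)

lemma norm_Ymat_True_mult_le: "norm (Ymat True ** (M :: real^2^2)) \<le> sqrt 3 * norm M"
proof -
  have "(M$1$1 + M$2$1)\<^sup>2 + (M$1$2 + M$2$2)\<^sup>2 + (M$1$1)\<^sup>2 + (M$1$2)\<^sup>2
      \<le> 3 * ((M$1$1)\<^sup>2 + (M$1$2)\<^sup>2 + (M$2$1)\<^sup>2 + (M$2$2)\<^sup>2)"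
    using sum_squares_ge_zero[of "M$1$1 - M$2$1" "M$2$1"] sum_squares_ge_zero[of "M$1$2 - M$2$2" "M$2$2"]
    by (simp add: power2_eq_square algebra_simps)
  then show ?thesis
    by (simp add: norm_mat2 Ymat_mult_nth real_sqrt_mult[symmetric])
qed

definition row_sum :: "real^'n^'m \<Rightarrow> 'm \<Rightarrow> real" where
  "row_sum M i = (\<Sum>j\<in>UNIV. M $ i $ j)"

lemma row_sum_Ymat_mult:
  fixes M :: "real^'n^2"
  shows
  "row_sum (Ymat True ** M) 1 = row_sum M 1 + row_sum M 2"
  "row_sum (Ymat False ** M) 1 = row_sum M 2"
  "row_sum (Ymat e ** M) 2 = row_sum M 1"
  by (simp_all add: row_sum_def Ymat_mult_nth sum.distrib)

lemma row_sum_Sprod_pos: "0 < row_sum (Sprod es) i"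
proof (induction es arbitrary: i rule: rev_induct)
  case Nil
  then show ?case
    using exhaust_2[of i] by (auto simp: Sprod_Nil row_sum_def sum_2 mat_def)
next
  case (snoc e es)
  then show ?case
    using exhaust_2[of i] by (cases e) (auto simp: Sprod_snoc row_sum_Ymat_mult add_pos_pos)
qed

lemma sum_row_sum_le_norm:
  fixes M :: "real^'n^'m"
  shows "(\<Sum>i\<in>UNIV. row_sum M i) \<le> real CARD('m) * real CARD('n) * norm M"
proof -
  have "M $ i $ j \<le> norm M" for i j
    using component_le_norm_cart[of "M $ i" j] Finite_Cartesian_Product.norm_nth_le[of M i] by linarith
  then have "(\<Sum>i\<in>UNIV. row_sum M i) \<le> (\<Sum>(i::'m)\<in>UNIV. \<Sum>(j::'n)\<in>UNIV. norm M)"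
    unfolding row_sum_def by (intro sum_mono) simp
  then show ?thesis
    by simp
qed

lemma norm_Sprod_pos: "0 < norm (Sprod es)"
proof -
  have "row_sum (Sprod es) 1 + row_sum (Sprod es) 2 \<le> 4 * norm (Sprod es)"
    using sum_row_sum_le_norm[of "Sprod es"] by (simp add: sum_2)
  with row_sum_Sprod_pos[of es 1] row_sum_Sprod_pos[of es 2] show ?thesis
    by linarith
qed

section \<open>A potential for the row sums\<close>

definition drift_rate :: "real \<Rightarrow> real" where
  "drift_rate p = p / (4 - p)"

definition correction_shift :: "real \<Rightarrow> real" where
  "correction_shift p = 2 / (3 * (4 - p)) - 1 / 4"

definition correction :: "real \<Rightarrow> real \<Rightarrow> real" where
  "correction p r = (if r < 1/2 then 0 else if r < 1 then 2 * drift_rate p / 3 - correction_shift p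
                     else if r \<le> 2 then drift_rate p - correction_shift p else drift_rate p)"

definition growth_floor :: "real \<Rightarrow> real" where
  "growth_floor r = (if r < 1/2 then 0 else if r < 1 then 1/4 else if r \<le> 2 then 1/3 else 9/20)"

definition potential :: "real \<Rightarrow> real \<Rightarrow> real \<Rightarrow> real" where
  "potential p a b = ln (a + b) + ln 3 * correction p (a / b)"

lemma ln_mult_div_le_ln_of_power_le:
  fixes a c x :: real
  assumes "0 < a" "0 < c" "c \<le> x" "0 < n" "a ^ m \<le> c ^ n"
  shows "ln a * (m / n) \<le> ln x"
proof -
  have "m * ln a \<le> n * ln c"
    using assms by (simp flip: ln_realpow)
  also have "\<dots> \<le> n * ln x"
    using assms by (intro mult_left_mono) auto
  finally show ?thesis
    using assms by (simp add: field_simps)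
qed

lemma ln3_mult_growth_floor_le:
  assumes "0 < r"
  shows "ln 3 * growth_floor r \<le> ln ((2 * r + 1) / (r + 1))"
proof -
  consider "r < 1/2" | "1/2 \<le> r" "r < 1" | "1 \<le> r" "r \<le> 2" | "2 < r"
    by linarith
  then show ?thesis
  proof cases
    case 1
    then show ?thesis using assms by (simp add: growth_floor_def)
  next
    case 2
    then show ?thesis
      using ln_mult_div_le_ln_of_power_le[of 3 "4/3" "(2 * r + 1) / (r + 1)" 4 1] assms
      by (simp add: growth_floor_def field_simps)
  next
    case 3
    then show ?thesis
      using ln_mult_div_le_ln_of_power_le[of 3 "3/2" "(2 * r + 1) / (r + 1)" 3 1] assms
      by (simp add: growth_floor_def field_simps)
  next
    case 4
    then show ?thesis
      using ln_mult_div_le_ln_of_power_le[of 3 "5/3" "(2 * r + 1) / (r + 1)" 20 9] assms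
      by (simp add: growth_floor_def field_simps)
  qed
qed

lemma correction_drift:
  assumes p: "0 < p" "p < 1" and "0 < r"
  shows "drift_rate p \<le> p * growth_floor r + p * correction p (1 + 1 / r) + (1 - p) * correction p (1 / r)
                   - correction p r"
proof -
  have shift: "p * correction_shift p = 2 * drift_rate p / 3 - p / 4"
    using p by (simp add: drift_rate_def correction_shift_def field_simps)
  have rate_eq: "drift_rate p * (4 - p) = p"
    using p by (simp add: drift_rate_def)
  consider "r < 1/2" | "1/2 \<le> r" "r < 1" | "1 \<le> r" "r \<le> 2" | "2 < r"
    by linarith
  then show ?thesis
  proof cases
    case 1
    then have vals: "correction p (1 + 1 / r) = drift_rate p" "correction p (1 / r) = drift_rate p"
      "correction p r = 0"
      using \<open>0 < r\<close> by (auto simp: correction_def field_simps)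
    show ?thesis
      unfolding vals using 1 by (simp add: growth_floor_def algebra_simps)
  next
    case 2
    then have vals: "correction p (1 + 1 / r) = drift_rate p" "correction p (1 / r) = drift_rate p - correction_shift p"
      "correction p r = 2 * drift_rate p / 3 - correction_shift p"
      using \<open>0 < r\<close> by (auto simp: correction_def field_simps)
    show ?thesis
      unfolding vals using 2 shift by (simp add: growth_floor_def algebra_simps)
  next
    case 3
    then have vals: "growth_floor r = 1/3" "correction p (1 + 1 / r) = drift_rate p - correction_shift p"
      "correction p r = drift_rate p - correction_shift p"
      using \<open>0 < r\<close> by (auto simp: growth_floor_def correction_def field_simps)
    have "0 \<le> drift_rate p"
      using p by (simp add: drift_rate_def)
    with 3 have "2 * drift_rate p / 3 - correction_shift p \<le> correction p (1 / r)"
      by (auto simp: correction_def field_simps)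
    then have "(1 - p) * (2 * drift_rate p / 3 - correction_shift p) \<le> (1 - p) * correction p (1 / r)"
      using p by (intro mult_left_mono) auto
    moreover have "p * (1/3) + p * (drift_rate p - correction_shift p) + (1 - p) * (2 * drift_rate p / 3 - correction_shift p)
        - (drift_rate p - correction_shift p) = drift_rate p + (p - drift_rate p * (4 - p)) / 3"
      by (simp add: field_simps)
    ultimately show ?thesis
      unfolding vals rate_eq by simp
  next
    case 4
    then have vals: "growth_floor r = 9/20" "correction p (1 + 1 / r) = drift_rate p - correction_shift p"
      "correction p (1 / r) = 0" "correction p r = drift_rate p"
      using \<open>0 < r\<close> by (auto simp: growth_floor_def correction_def field_simps)
    have "p / 4 \<le> drift_rate p"
      unfolding drift_rate_def using p by (intro divide_left_mono) auto
    moreover have "p * drift_rate p = 4 * drift_rate p - p"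
      using rate_eq by (simp add: algebra_simps)
    moreover have "p * (drift_rate p - correction_shift p) = p * drift_rate p - p * correction_shift p"
      by (simp add: algebra_simps)
    ultimately show ?thesis
      unfolding vals using shift p by linarith
  qed
qed

lemma potential_drift:
  assumes p: "0 < p" "p < 1" and "0 < a" "0 < b"
  shows "potential p a b + ln 3 * drift_rate p \<le> p * potential p (a + b) a + (1 - p) * potential p b a"
proof -
  define r where "r = a / b"
  have "0 < r"
    using assms by (simp add: r_def)
  have ratios: "(a + b) / a = 1 + 1 / r" "b / a = 1 / r"
    using assms by (simp_all add: r_def field_simps)
  have "(2 * r + 1) / (r + 1) = (a + b + a) / (a + b)"
    using assms by (simp add: r_def divide_simps)
  then have growth: "ln (a + b + a) = ln (a + b) + ln ((2 * r + 1) / (r + 1))"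
    using assms by (simp add: ln_div)
  have "ln 3 * drift_rate p \<le> ln 3 * (p * growth_floor r + p * correction p (1 + 1 / r)
      + (1 - p) * correction p (1 / r) - correction p r)"
    using correction_drift[OF p \<open>0 < r\<close>] by simp
  also have "\<dots> \<le> p * ln ((2 * r + 1) / (r + 1)) + ln 3 * (p * correction p (1 + 1 / r)
      + (1 - p) * correction p (1 / r) - correction p r)"
    using mult_left_mono[OF ln3_mult_growth_floor_le[OF \<open>0 < r\<close>], of p] p by (simp add: algebra_simps)
  finally show ?thesis
    unfolding potential_def ratios growth r_def[symmetric] by (simp add: algebra_simps)
qed

lemma correction_le:
  assumes "0 \<le> p" "p < 4"
  shows "correction p r \<le> drift_rate p + \<bar>correction_shift p\<bar>"
proof -
  have "0 \<le> drift_rate p"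
    using assms by (simp add: drift_rate_def)
  then show ?thesis
    by (auto simp: correction_def)
qed

section \<open>Linear bounds on the expected log-norm\<close>

lemma exp_log_norm_eq_bern_expectation:
  "exp_log_norm p n = bern_expectation p n (\<lambda>es. ln (norm (Sprod es)))"
  by (simp add: exp_log_norm_def bern_expectation_def)

lemma exp_log_norm_subadditive:
  assumes "0 \<le> p" "p \<le> 1"
  shows "exp_log_norm p (m + n) \<le> exp_log_norm p m + exp_log_norm p n"
proof -
  have "ln (norm (Sprod (xs @ ys))) \<le> ln (norm (Sprod xs)) + ln (norm (Sprod ys))" for xs ys
  proof -
    have "ln (norm (Sprod (xs @ ys))) \<le> ln (norm (Sprod ys) * norm (Sprod xs))"
      using norm_matrix_mult_le[of "Sprod ys" "Sprod xs"] norm_Sprod_pos[of "xs @ ys"]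
      by (intro ln_mono) (simp_all add: Sprod_append)
    then show ?thesis
      using norm_Sprod_pos[of xs] norm_Sprod_pos[of ys] by (simp add: ln_mult)
  qed
  then have "exp_log_norm p (m + n) \<le>
      bern_expectation p m (\<lambda>xs. bern_expectation p n (\<lambda>ys. ln (norm (Sprod xs)) + ln (norm (Sprod ys))))"
    unfolding exp_log_norm_eq_bern_expectation bern_expectation_append
    using assms by (intro bern_expectation_mono) auto
  then show ?thesis
    by (simp add: bern_expectation_add exp_log_norm_eq_bern_expectation)
qed

lemma exp_log_norm_le_linear:
  assumes "0 \<le> p" "p \<le> 1"
  shows "exp_log_norm p n \<le> ln (norm (Sprod [])) + real n * (p * ln 3 / 2)"
  unfolding exp_log_norm_eq_bern_expectation
proof (rule bern_expectation_le_drift[OF assms])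
  fix es
  have "ln (norm (Sprod (es @ [True]))) \<le> ln (sqrt 3 * norm (Sprod es))"
    using norm_Ymat_True_mult_le[of "Sprod es"] norm_Sprod_pos[of "es @ [True]"]
    by (intro ln_mono) (simp_all add: Sprod_snoc)
  also have "\<dots> = ln 3 / 2 + ln (norm (Sprod es))"
    using norm_Sprod_pos[of es] by (simp add: ln_mult ln_sqrt)
  finally have "ln (norm (Sprod (es @ [True]))) \<le> ln 3 / 2 + ln (norm (Sprod es))" .
  from mult_left_mono[OF this assms(1)]
  show "p * ln (norm (Sprod (es @ [True]))) + (1 - p) * ln (norm (Sprod (es @ [False])))
      \<le> ln (norm (Sprod es)) + p * ln 3 / 2"
    by (simp add: Sprod_snoc norm_Ymat_False_mult algebra_simps)
qed

lemma potential_row_sums_le_ln_norm: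
  assumes "0 \<le> p" "p < 4"
  shows "potential p (row_sum (Sprod es) 1) (row_sum (Sprod es) 2)
           \<le> ln (norm (Sprod es)) + (ln 4 + ln 3 * (drift_rate p + \<bar>correction_shift p\<bar>))"
proof -
  have "row_sum (Sprod es) 1 + row_sum (Sprod es) 2 \<le> 4 * norm (Sprod es)"
    using sum_row_sum_le_norm[of "Sprod es"] by (simp add: sum_2)
  then have "ln (row_sum (Sprod es) 1 + row_sum (Sprod es) 2) \<le> ln (4 * norm (Sprod es))"
    using row_sum_Sprod_pos[of es] by (intro ln_mono) (auto intro: add_pos_pos)
  also have "\<dots> = ln 4 + ln (norm (Sprod es))"
    using norm_Sprod_pos[of es] by (simp add: ln_mult)
  moreover have "ln 3 * correction p (row_sum (Sprod es) 1 / row_sum (Sprod es) 2)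
      \<le> ln 3 * (drift_rate p + \<bar>correction_shift p\<bar>)"
    using correction_le[OF assms] by (intro mult_left_mono) auto
  ultimately show ?thesis
    unfolding potential_def by linarith
qed

lemma exp_log_norm_ge_linear:
  assumes p: "0 < p" "p < 1"
  obtains C where "\<And>n. C + real n * (p * ln 3 / (4 - p)) \<le> exp_log_norm p n"
proof -
  define V where "V es = potential p (row_sum (Sprod es) 1) (row_sum (Sprod es) 2)" for es
  define K where "K = ln 4 + ln 3 * (drift_rate p + \<bar>correction_shift p\<bar>)"
  have drift: "V es + ln 3 * drift_rate p \<le> p * V (es @ [True]) + (1 - p) * V (es @ [False])" for es
    using potential_drift[OF p row_sum_Sprod_pos row_sum_Sprod_pos]
    by (simp add: V_def Sprod_snoc row_sum_Ymat_mult)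
  have "V [] - K + real n * (p * ln 3 / (4 - p)) \<le> exp_log_norm p n" for n
  proof -
    have "V [] + real n * (ln 3 * drift_rate p) \<le> bern_expectation p n V"
      using drift p by (intro bern_expectation_ge_drift) auto
    also have "\<dots> \<le> bern_expectation p n (\<lambda>es. ln (norm (Sprod es)) + K)"
      using p potential_row_sums_le_ln_norm[of p]
      by (intro bern_expectation_mono) (auto simp: V_def K_def)
    also have "\<dots> = exp_log_norm p n + K"
      by (simp add: bern_expectation_add exp_log_norm_eq_bern_expectation)
    finally show ?thesis
      by (simp add: drift_rate_def algebra_simps)
  qed
  then show ?thesis
    by (rule that)
qed

theorem theorem3p3:
  fixes p :: real
  assumes "0 < p" and "p < 1"
  shows "\<exists>lam. (\<lambda>n. exp_log_norm p n / real n) \<longlonglongrightarrow> lam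
           \<and> p * ln 3 / (4 - p) \<le> lam \<and> lam \<le> p * ln 3 / 2"
proof -
  obtain C where lower: "\<And>n. C + real n * (p * ln 3 / (4 - p)) \<le> exp_log_norm p n"
    using exp_log_norm_ge_linear[OF assms] by blast
  have upper: "\<And>n. exp_log_norm p n \<le> ln (norm (Sprod [])) + real n * (p * ln 3 / 2)"
    using exp_log_norm_le_linear assms by simp
  have "\<And>m n. exp_log_norm p (m + n) \<le> exp_log_norm p m + exp_log_norm p n"
    using exp_log_norm_subadditive assms by simp
  from subadditive_quotient_convergent[OF this lower]
  obtain lam where lim: "(\<lambda>n. exp_log_norm p n / real n) \<longlonglongrightarrow> lam"
    unfolding convergent_def ..
  with limit_quotient_between_slopes[OF lim lower upper] show ?thesis
    by blast
qed

end
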